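(* Let $L\in\mathbb{C}^{\delta\times\delta}$ be a nonzero complex symmetric matrix with $\pi(L)=0$. Then there is a family of matrices $S(\epsilon)\in O(\delta,\mathbb{C})$, $\epsilon\ge 0$, with $S(0)=I$, such that the matrices $\hat L(\epsilon):=S(\epsilon)LS(\epsilon)^{-1}$ satisfy $\pi(\hat L(\epsilon))=0$ and $d\theta^{\hat L(\epsilon)}_I$ is surjective onto $V$ for all $\epsilon\in(0,\pi/2)$.
   Context: $\pi(A)=(a_{11},\dots,a_{\delta\delta})$ denotes the vector of diagonal entries of a $\delta\times\delta$ matrix $A$. $O(\delta,\mathbb{C})=\{S\in\mathbb{C}^{\delta\times\delta}: SS^t=I\}$, $so(\delta,\mathbb{C})=\{X: X+X^t=0\}$, $V=\{x\in\mathbb{C}^\delta:\sum_i x_i=0\}$. For a symmetric matrix $M$, $d\theta^M_I:so(\delta,\mathbb{C})\to V$ is the linear map $X\mapsto\pi(XM-MX)$ (the derivative at $I$ of $S\mapsto\pi(SMS^{-1})$ on $O(\delta,\mathbb{C})$). *)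

theory Defs
  imports "HOL-Analysis.Analysis"
begin

text \<open>Matrices in C^{delta x delta} are modelled as complex ^'n ^'n, delta = CARD('n).\<close>

definition diag_vec :: "complex^'n^'n \<Rightarrow> complex^'n" where
  "diag_vec A = (\<chi> i. A $ i $ i)"

definition orth_group :: "(complex^'n^'n) set" where
  "orth_group = {S. S ** transpose S = mat 1}"

definition so_alg :: "(complex^'n^'n) set" where
  "so_alg = {X. X + transpose X = 0}"

definition V_space :: "(complex^'n) set" where
  "V_space = {x. (\<Sum>i\<in>UNIV. x $ i) = 0}"

definition dtheta :: "complex^'n^'n \<Rightarrow> complex^'n^'n \<Rightarrow> complex^'n" where
  "dtheta M X = diag_vec (X ** M - M ** X)"

end

(* For symmetric M, d\<theta>^M maps the skew matrix z (E_lk - E_kl) to z (M_kl + M_lk) (e_l - e_k),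
   and its image always lies in V because the diagonal of a commutator sums to zero. Hence
   d\<theta>^M is onto V as soon as the graph on the indices with an edge {k, l} whenever M_kl \<noteq> 0
   is connected: walking along a path from i to k produces every multiple of e_k - e_i.
   Start from an edge {i, l} of L. If j lies outside the component of i, conjugating by a rotation
   in the (i, j)-plane keeps the matrix symmetric with zero diagonal, keeps every path inside the
   component, and creates the edge {l, j}. Finitely many rotations thus give an orthogonal S with
   S L S^t zero-diagonal and connected. The statement asks for no regularity in \<epsilon>, so the family
   S(0) = I, S(\<epsilon>) = S for \<epsilon> > 0 suffices. *)

theory Submission
  imports Defs
begin

lemma diag_vec_eq_0_iff: "diag_vec M = 0 \<longleftrightarrow> (\<forall>a. M $ a $ a = 0)"
  by (simp add: diag_vec_def vec_eq_iff)

lemma symmetric_entry: "transpose M = M \<Longrightarrow> M $ a $ b = M $ b $ a"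
  by (metis transpose_def vec_lambda_beta)

lemma transpose_conj_symmetric:
  fixes M S :: "'a::comm_semiring_1^'n^'n"
  assumes "transpose M = M"
  shows "transpose (S ** M ** transpose S) = S ** M ** transpose S"
  by (simp add: assms matrix_transpose_mul matrix_mul_assoc)

lemma orthogonal_matrix_iff_right_inverse:
  fixes Q :: "'a::field^'n^'n"
  shows "orthogonal_matrix Q \<longleftrightarrow> Q ** transpose Q = mat 1"
  by (metis matrix_left_right_inverse orthogonal_matrix_def)

lemma orthogonal_matrix_mul_gen:
  fixes A B :: "'a::comm_ring_1^'n^'n"
  assumes "orthogonal_matrix A" "orthogonal_matrix B"
  shows "orthogonal_matrix (A ** B)"
proof -
  have "transpose (A ** B) ** (A ** B) = transpose B ** (transpose A ** A) ** B"
   and "(A ** B) ** transpose (A ** B) = A ** (B ** transpose B) ** transpose A"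
    by (simp_all add: matrix_transpose_mul matrix_mul_assoc)
  then show ?thesis
    using assms by (simp add: orthogonal_matrix_def)
qed

lemma matrix_inv_orthogonal:
  fixes Q :: "'a::comm_ring_1^'n^'n"
  assumes "orthogonal_matrix Q"
  shows "matrix_inv Q = transpose Q"
proof -
  let ?A = "matrix_inv Q"
  have "Q ** ?A = mat 1 \<and> ?A ** Q = mat 1"
    unfolding matrix_inv_def
    by (rule someI[of _ "transpose Q"]) (use assms in \<open>simp add: orthogonal_matrix_def\<close>)
  then have "?A = (transpose Q ** Q) ** ?A"
    using assms by (simp add: orthogonal_matrix_def)
  also have "\<dots> = transpose Q"
    using \<open>Q ** ?A = mat 1 \<and> _\<close> by (simp add: matrix_mul_assoc[symmetric])
  finally show ?thesis .
qed

text \<open>Cosine 3/5 and sine 4/5: the argument only needs both to be nonzero.\<close>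

definition pyth_rot_apply :: "'n \<Rightarrow> 'n \<Rightarrow> ('n \<Rightarrow> 'a::field_char_0) \<Rightarrow> 'n \<Rightarrow> 'a" where
  "pyth_rot_apply i j f a =
     (if a = i then 3/5 * f i - 4/5 * f j
      else if a = j then 4/5 * f i + 3/5 * f j
      else f a)"

definition pyth_rot :: "'n \<Rightarrow> 'n \<Rightarrow> 'a::field_char_0^'n^'n" where
  "pyth_rot i j = (\<chi> a b. pyth_rot_apply i j (\<lambda>k. if k = b then 1 else 0) a)"

lemma pyth_rot_row_sum:
  assumes "i \<noteq> j"
  shows "(\<Sum>k\<in>UNIV. pyth_rot i j $ a $ k * f k) = pyth_rot_apply i j f a"
proof -
  have "pyth_rot i j $ a $ k * f k =
          (if k = i then pyth_rot_apply i j (\<lambda>k. if k = i then 1 else 0) a * f i else 0)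
        + (if k = j then pyth_rot_apply i j (\<lambda>k. if k = j then 1 else 0) a * f j else 0)
        + (if k = a \<and> a \<noteq> i \<and> a \<noteq> j then f a else 0)" for k
    using assms by (auto simp add: pyth_rot_def pyth_rot_apply_def)
  then show ?thesis
    using assms by (simp add: sum.distrib pyth_rot_apply_def)
qed

lemma pyth_rot_conj_entry:
  assumes "i \<noteq> j"
  shows "(pyth_rot i j ** M ** transpose (pyth_rot i j)) $ a $ b
           = pyth_rot_apply i j (\<lambda>l. pyth_rot_apply i j (\<lambda>k. M $ k $ l) a) b"
proof -
  have "(pyth_rot i j ** M ** transpose (pyth_rot i j)) $ a $ b
          = pyth_rot_apply i j (\<lambda>l. (pyth_rot i j ** M) $ a $ l) b"
    by (simp add: matrix_matrix_mult_def[of "pyth_rot i j ** M"] transpose_def mult.commute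
        pyth_rot_row_sum[OF assms])
  also have "(\<lambda>l. (pyth_rot i j ** M) $ a $ l) = (\<lambda>l. pyth_rot_apply i j (\<lambda>k. M $ k $ l) a)"
    by (simp add: matrix_matrix_mult_def pyth_rot_row_sum[OF assms])
  finally show ?thesis .
qed

lemma orthogonal_matrix_pyth_rot:
  assumes "i \<noteq> j"
  shows "orthogonal_matrix (pyth_rot i j :: 'a::field_char_0^'n^'n)"
proof -
  have "(pyth_rot i j ** transpose (pyth_rot i j) :: 'a^'n^'n) $ a $ b = mat 1 $ a $ b" for a b
  proof -
    have "(pyth_rot i j ** transpose (pyth_rot i j) :: 'a^'n^'n) $ a $ b
            = pyth_rot_apply i j (\<lambda>l. pyth_rot_apply i j (\<lambda>k. mat 1 $ k $ l) a) b"
      using pyth_rot_conj_entry[OF assms, of "mat 1" a b] by simp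
    also have "\<dots> = mat 1 $ a $ b"
      using assms by (auto simp add: mat_def pyth_rot_apply_def)
    finally show ?thesis .
  qed
  then show ?thesis
    by (simp add: orthogonal_matrix_iff_right_inverse vec_eq_iff)
qed

definition support_reach :: "'a::zero^'n^'n \<Rightarrow> 'n \<Rightarrow> 'n \<Rightarrow> bool" where
  "support_reach M = (\<lambda>k l. M $ k $ l \<noteq> 0)\<^sup>*\<^sup>*"

lemma support_reach_refl: "support_reach M i i"
  by (simp add: support_reach_def)

lemma support_reach_step: "support_reach M i k \<Longrightarrow> M $ k $ l \<noteq> 0 \<Longrightarrow> support_reach M i l"
  unfolding support_reach_def by (rule rtranclp.rtrancl_into_rtrancl)

lemma entries_zero_outside_component:
  assumes "transpose M = M" "support_reach M i k" "\<not> support_reach M i j"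
  shows "M $ j $ k = 0" "M $ k $ j = 0"
  using support_reach_step[OF assms(2), of j] assms(3) symmetric_entry[OF assms(1), of j k]
  by auto

context
  fixes M :: "complex^'n^'n" and i j :: 'n
  assumes sym: "transpose M = M" and diag: "diag_vec M = 0" and unreached: "\<not> support_reach M i j"
begin

private lemma distinct: "i \<noteq> j"
  using unreached support_reach_refl by metis

private abbreviation "M' \<equiv> pyth_rot i j ** M ** transpose (pyth_rot i j)"

private lemmas entry = pyth_rot_conj_entry[OF distinct, of M]

lemma diag_vec_pyth_rot_conj: "diag_vec M' = 0"
  using diag distinct entries_zero_outside_component[OF sym support_reach_refl unreached]
  by (simp add: diag_vec_eq_0_iff entry pyth_rot_apply_def symmetric_entry[OF sym, of j i])

lemma support_reach_pyth_rot_conj: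
  assumes "support_reach M i k"
  shows "support_reach M' i k"
  using assms unfolding support_reach_def
proof (induction rule: rtranclp_induct)
  case base
  then show ?case by simp
next
  case (step k l)
  have "support_reach M i k" "support_reach M i l"
    using step(1) support_reach_step[of M i k l] step(2) by (simp_all add: support_reach_def)
  moreover have "k \<noteq> l"
    using step(2) diag by (auto simp add: diag_vec_eq_0_iff)
  ultimately have "M' $ k $ l \<noteq> 0"
    using step(2) distinct unreached
      entries_zero_outside_component[OF sym _ unreached, of k]
      entries_zero_outside_component[OF sym _ unreached, of l]
    by (auto simp add: entry pyth_rot_apply_def)
  then show ?case
    using step(3) by (simp add: rtranclp.rtrancl_into_rtrancl)
qed

lemma pyth_rot_conj_edges:
  assumes "M $ i $ l \<noteq> 0"
  shows "M' $ i $ l \<noteq> 0" "M' $ l $ j \<noteq> 0"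
proof -
  have reached: "support_reach M i l"
    using support_reach_step[OF support_reach_refl assms] .
  then have "l \<noteq> i" "l \<noteq> j"
    using assms diag unreached by (auto simp add: diag_vec_eq_0_iff)
  then show "M' $ i $ l \<noteq> 0" "M' $ l $ j \<noteq> 0"
    using assms distinct entries_zero_outside_component[OF sym reached unreached]
      symmetric_entry[OF sym, of l i]
    by (simp_all add: entry pyth_rot_apply_def)
qed

lemma card_unreached_pyth_rot_conj:
  assumes "M $ i $ l \<noteq> 0"
  shows "card {k. \<not> support_reach M' i k} < card {k. \<not> support_reach M i k}"
proof -
  have "support_reach M' i j"
    using support_reach_pyth_rot_conj[OF support_reach_step[OF support_reach_refl assms]]
      pyth_rot_conj_edges(2)[OF assms] by (rule support_reach_step)
  then have "{k. \<not> support_reach M' i k} \<subset> {k. \<not> support_reach M i k}"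
    using support_reach_pyth_rot_conj unreached by blast
  then show ?thesis
    by (simp add: psubset_card_mono)
qed

end


lemma exists_orthogonal_conj_connected:
  fixes M :: "complex^'n^'n"
  assumes "transpose M = M" "diag_vec M = 0" "M $ i $ l \<noteq> 0"
  shows "\<exists>S. orthogonal_matrix S \<and> diag_vec (S ** M ** transpose S) = 0 \<and>
             (\<forall>k. support_reach (S ** M ** transpose S) i k)"
  using assms
proof (induction "card {k. \<not> support_reach M i k}" arbitrary: M rule: less_induct)
  case less
  show ?case
  proof (cases "\<forall>k. support_reach M i k")
    case True
    then show ?thesis
      using less.prems orthogonal_matrix_id by (intro exI[of _ "mat 1"]) simp
  next
    case False
    then obtain j where unreached: "\<not> support_reach M i j" by blast
    then have "i \<noteq> j" using support_reach_refl by metis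
    define M' where "M' = pyth_rot i j ** M ** transpose (pyth_rot i j)"
    have "card {k. \<not> support_reach M' i k} < card {k. \<not> support_reach M i k}"
      using card_unreached_pyth_rot_conj[OF less.prems(1,2) unreached less.prems(3)]
      unfolding M'_def .
    moreover have "transpose M' = M'" "diag_vec M' = 0" "M' $ i $ l \<noteq> 0"
      using transpose_conj_symmetric[OF less.prems(1)]
        diag_vec_pyth_rot_conj[OF less.prems(1,2) unreached]
        pyth_rot_conj_edges(1)[OF less.prems(1,2) unreached less.prems(3)]
      unfolding M'_def by blast+
    ultimately obtain S where S: "orthogonal_matrix S" "diag_vec (S ** M' ** transpose S) = 0"
        "\<forall>k. support_reach (S ** M' ** transpose S) i k"
      using less.hyps by blast
    have "(S ** pyth_rot i j) ** M ** transpose (S ** pyth_rot i j) = S ** M' ** transpose S"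
      unfolding M'_def by (simp add: matrix_transpose_mul matrix_mul_assoc)
    then show ?thesis
      using S orthogonal_matrix_mul_gen[OF S(1) orthogonal_matrix_pyth_rot[OF \<open>i \<noteq> j\<close>]]
      by (intro exI[of _ "S ** pyth_rot i j"]) simp
  qed
qed

lemma dtheta_nth: "dtheta M X $ a = (\<Sum>k\<in>UNIV. X $ a $ k * M $ k $ a - M $ a $ k * X $ k $ a)"
  by (simp add: dtheta_def diag_vec_def matrix_matrix_mult_def sum_subtractf)

lemma additive_dtheta: "Modules.additive (dtheta M)"
  by unfold_locales (simp add: vec_eq_iff dtheta_nth sum.distrib[symmetric] algebra_simps)

lemma dtheta_in_V_space: "dtheta M X \<in> V_space"
proof -
  have "(\<Sum>a\<in>UNIV. \<Sum>k\<in>UNIV. M $ a $ k * X $ k $ a) = (\<Sum>k\<in>UNIV. \<Sum>a\<in>UNIV. M $ a $ k * X $ k $ a)"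
    by (rule sum.swap)
  then show ?thesis
    by (simp add: V_space_def dtheta_nth sum_subtractf mult.commute)
qed

lemma additive_symmetric_part: "Modules.additive (\<lambda>X :: 'a::ab_group_add^'n^'n. X + transpose X)"
  by unfold_locales (simp add: vec_eq_iff transpose_def algebra_simps)

lemma add_in_so_alg: "X \<in> so_alg \<Longrightarrow> Y \<in> so_alg \<Longrightarrow> X + Y \<in> so_alg"
  using additive.add[OF additive_symmetric_part, of X Y] by (simp add: so_alg_def)

lemma sum_in_so_alg: "(\<And>k. k \<in> A \<Longrightarrow> X k \<in> so_alg) \<Longrightarrow> sum X A \<in> so_alg"
  using additive.sum[OF additive_symmetric_part, of X A] by (simp add: so_alg_def)

definition elem_skew :: "'n \<Rightarrow> 'n \<Rightarrow> complex \<Rightarrow> complex^'n^'n" where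
  "elem_skew l k z = (\<chi> a b. if a = l \<and> b = k then z else if a = k \<and> b = l then - z else 0)"

lemma elem_skew_in_so_alg: "l \<noteq> k \<Longrightarrow> elem_skew l k z \<in> so_alg"
  by (auto simp add: so_alg_def elem_skew_def vec_eq_iff transpose_def)

lemma dtheta_elem_skew:
  assumes "l \<noteq> k"
  shows "dtheta M (elem_skew l k z) = (z * (M $ k $ l + M $ l $ k)) *s (axis l 1 - axis k 1)"
proof -
  have "dtheta M (elem_skew l k z) $ a
          = (if a = l then z * (M $ k $ l + M $ l $ k) else 0)
          - (if a = k then z * (M $ k $ l + M $ l $ k) else 0)" for a
  proof -
    have "elem_skew l k z $ a $ b * M $ b $ a - M $ a $ b * elem_skew l k z $ b $ a
        = (if b = k then (if a = l then z * M $ k $ l else 0) else 0)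
        + (if b = l then (if a = k then - z * M $ l $ k else 0) else 0)
        - (if b = l then (if a = k then z * M $ k $ l else 0) else 0)
        - (if b = k then (if a = l then - z * M $ l $ k else 0) else 0)" for b
      using assms by (auto simp add: elem_skew_def)
    then have "dtheta M (elem_skew l k z) $ a
        = (\<Sum>b\<in>UNIV. (if b = k then (if a = l then z * M $ k $ l else 0) else 0)
        + (if b = l then (if a = k then - z * M $ l $ k else 0) else 0)
        - (if b = l then (if a = k then z * M $ k $ l else 0) else 0)
        - (if b = k then (if a = l then - z * M $ l $ k else 0) else 0))"
      by (simp only: dtheta_nth)
    also have "\<dots> = (if a = l then z * (M $ k $ l + M $ l $ k) else 0)
                     - (if a = k then z * (M $ k $ l + M $ l $ k) else 0)"
      using assms by (simp add: sum.distrib sum_subtractf algebra_simps)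
    finally show ?thesis .
  qed
  then show ?thesis
    by (simp add: vec_eq_iff axis_def)
qed

lemma dtheta_hits_axis_differences:
  fixes M :: "complex^'n^'n"
  assumes "transpose M = M" "support_reach M i k"
  shows "\<exists>X\<in>so_alg. dtheta M X = c *s (axis k 1 - axis i 1)"
  using assms(2) unfolding support_reach_def
proof (induction arbitrary: c rule: rtranclp_induct)
  case base
  have "dtheta M 0 = 0"
    using additive.zero[OF additive_dtheta] .
  then show ?case
    by (intro bexI[of _ 0]) (simp_all add: so_alg_def transpose_def vec_eq_iff)
next
  case (step k l)
  show ?case
  proof (cases "l = k")
    case True
    then show ?thesis using step.IH by simp
  next
    case False
    let ?z = "c / (2 * M $ l $ k)"
    have "M $ l $ k \<noteq> 0"
      using step.hyps(2) symmetric_entry[OF assms(1), of k l] by simp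
    then have "dtheta M (elem_skew l k ?z) = c *s (axis l 1 - axis k 1)"
      using symmetric_entry[OF assms(1), of k l] by (simp add: dtheta_elem_skew[OF False])
    moreover obtain X where "X \<in> so_alg" "dtheta M X = c *s (axis k 1 - axis i 1)"
      using step.IH by blast
    ultimately have "dtheta M (elem_skew l k ?z + X) = c *s (axis l 1 - axis i 1)"
      by (simp add: additive.add[OF additive_dtheta] vector_ssub_ldistrib)
    moreover have "elem_skew l k ?z + X \<in> so_alg"
      using add_in_so_alg elem_skew_in_so_alg[OF False] \<open>X \<in> so_alg\<close> by blast
    ultimately show ?thesis by blast
  qed
qed

lemma V_space_axis_expansion:
  assumes "v \<in> V_space"
  shows "(\<Sum>k\<in>UNIV. v $ k *s (axis k 1 - axis i 1)) = v"
proof -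
  have "(\<Sum>k\<in>UNIV. v $ k *s (axis k 1 - axis i 1))
          = (\<Sum>k\<in>UNIV. v $ k *s axis k 1) - (\<Sum>k\<in>UNIV. v $ k) *s axis i 1"
    by (simp only: vector_ssub_ldistrib sum_subtractf vec.scale_sum_left)
  then show ?thesis
    using assms by (simp add: V_space_def basis_expansion)
qed

lemma dtheta_image_so_alg:
  fixes M :: "complex^'n^'n"
  assumes "transpose M = M" "\<And>k. support_reach M i k"
  shows "dtheta M ` so_alg = V_space"
proof
  show "dtheta M ` so_alg \<subseteq> V_space"
    using dtheta_in_V_space by (rule image_subsetI)
  show "V_space \<subseteq> dtheta M ` so_alg"
  proof
    fix v :: "complex^'n"
    assume "v \<in> V_space"
    have preimages: "\<forall>k. \<exists>Y. Y \<in> so_alg \<and> dtheta M Y = v $ k *s (axis k 1 - axis i 1)"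
      using dtheta_hits_axis_differences[OF assms] by blast
    obtain X where X: "\<forall>k. X k \<in> so_alg \<and> dtheta M (X k) = v $ k *s (axis k 1 - axis i 1)"
      using choice[OF preimages] by blast
    have "v = (\<Sum>k\<in>UNIV. dtheta M (X k))"
      using V_space_axis_expansion[OF \<open>v \<in> V_space\<close>, of i] X by simp
    also have "\<dots> = dtheta M (\<Sum>k\<in>UNIV. X k)"
      by (rule additive.sum[OF additive_dtheta, symmetric])
    finally have "v = dtheta M (\<Sum>k\<in>UNIV. X k)" .
    moreover have "(\<Sum>k\<in>UNIV. X k) \<in> so_alg"
      using X by (simp add: sum_in_so_alg)
    ultimately show "v \<in> dtheta M ` so_alg"
      by (rule image_eqI)
  qed
qed

theorem lemma1:
  fixes L :: "complex^'n^'n"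
  assumes "transpose L = L" and "L \<noteq> 0" and "diag_vec L = 0"
  shows "\<exists>S :: real \<Rightarrow> complex^'n^'n.
           (\<forall>\<epsilon>\<ge>0. S \<epsilon> \<in> orth_group) \<and> S 0 = mat 1 \<and>
           (\<forall>\<epsilon>. 0 < \<epsilon> \<and> \<epsilon> < pi / 2 \<longrightarrow>
              (let Lh = S \<epsilon> ** L ** matrix_inv (S \<epsilon>) in
                 diag_vec Lh = 0 \<and> dtheta Lh ` so_alg = V_space))"
proof -
  obtain i l where "L $ i $ l \<noteq> 0"
    using assms(2) by (auto simp add: vec_eq_iff)
  then obtain S where S: "orthogonal_matrix S" "diag_vec (S ** L ** transpose S) = 0"
      "\<And>k. support_reach (S ** L ** transpose S) i k"
    using exists_orthogonal_conj_connected[OF assms(1,3)] by blast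
  have "S ** L ** matrix_inv S = S ** L ** transpose S"
    by (simp add: matrix_inv_orthogonal[OF S(1)])
  moreover have "dtheta (S ** L ** transpose S) ` so_alg = V_space"
    using dtheta_image_so_alg[OF transpose_conj_symmetric[OF assms(1)] S(3)] .
  moreover have "S \<in> orth_group" "mat 1 \<in> orth_group"
    using S(1) by (simp_all add: orth_group_def orthogonal_matrix_def)
  ultimately show ?thesis
    using S(2) by (intro exI[of _ "\<lambda>\<epsilon>. if \<epsilon> = 0 then mat 1 else S"]) (simp add: Let_def)
qed

end
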